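(* If $(T,\mu,\mathcal{A})\in\mathcal{T}$ is $\alpha$-mixing, then $T$ is exact with respect to $\mu$, i.e. $\bigcap_{n\ge0}T^{-n}\mathcal{B}=\{\emptyset,X\}$ modulo $\mu$ (and hence $T$ has positive entropy).
   Context: Let $X=[0,1]$, $\mathcal{B}$ its Borel $\sigma$-algebra, $\lambda$ Lebesgue measure. A partition of $[0,1]$ is a finite or countable family of intervals with nonempty pairwise disjoint interiors whose union is $[0,1]$ up to a $\lambda$-null set. The class $\mathcal{T}$ consists of triples $(T,\mu,\mathcal{A})$ where $\mu$ is a Borel probability measure on $[0,1]$ with $\frac1c\mu(A)\le\lambda(A)\le c\mu(A)$ for all $A\in\mathcal{B}$ for some $c\ge1$, $T:[0,1]\to[0,1]$ is measurable, $\mu$-preserving and ergodic, and $\mathcal{A}$ is a partition of $[0,1]$ such that: $T|_{\mathrm{int}(I)}$ is continuous and strictly monotone for each $I\in\mathcal{A}$; $\bigvee_{j\ge0}T^{-j}\sigma(\mathcal{A})=\mathcal{B}$ mod $\lambda$; and $H(\mathcal{A})=-\sum_{I\in\mathcal{A}}\mu(I)\log\mu(I)<\infty$. Write $\mathcal{A}^l=\bigvee_{j=0}^{l-1}T^{-j}\mathcal{A}$. $(T,\mu,\mathcal{A})\in\mathcal{T}$ is $\alpha$-mixing if there are nonnegative reals $\alpha(n)\to0$ such that for every $l\in\mathbb{N}$, every integer $n\ge0$, every $A\in\sigma(\mathcal{A}^l)$ and every $B\in\mathcal{B}$: $|\mu(A\cap T^{-(n+l)}B)-\mu(A)\mu(B)|\le\alpha(n)$.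 *)

theory Defs
  imports "HOL-Probability.Probability"
begin

definition unit_borel :: "real measure" where
  "unit_borel = restrict_space borel {0..1}"

definition is_interval_partition :: "real set set \<Rightarrow> bool" where
  "is_interval_partition P \<longleftrightarrow>
     countable P \<and>
     (\<forall>I\<in>P. is_interval I \<and> I \<subseteq> {0..1} \<and> interior I \<noteq> {}) \<and>
     (\<forall>I\<in>P. \<forall>J\<in>P. I \<noteq> J \<longrightarrow> interior I \<inter> interior J = {}) \<and>
     {0..1} - \<Union>P \<in> null_sets lborel"

definition preim :: "(real \<Rightarrow> real) \<Rightarrow> nat \<Rightarrow> real set \<Rightarrow> real set" where
  "preim T j S = {0..1} \<inter> (T ^^ j) -` S"

definition preim_sigma :: "(real \<Rightarrow> real) \<Rightarrow> real set set \<Rightarrow> nat \<Rightarrow> real set set" where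
  "preim_sigma T P j = preim T j ` sigma_sets {0..1} P"

definition refine :: "(real \<Rightarrow> real) \<Rightarrow> real set set \<Rightarrow> nat \<Rightarrow> real set set" where
  "refine T P l = {{0..1} \<inter> (\<Inter>j<l. (T ^^ j) -` (I j)) | I. \<forall>j<l. I j \<in> P}"

definition in_class_T :: "(real \<Rightarrow> real) \<Rightarrow> real measure \<Rightarrow> real set set \<Rightarrow> bool" where
  "in_class_T T \<mu> P \<longleftrightarrow>
     \<comment> \<open>mu is a Borel probability measure on [0,1], equivalent to Lebesgue measure\<close>
     prob_space \<mu> \<and> sets \<mu> = sets unit_borel \<and> space \<mu> = {0..1} \<and>
     (\<exists>c::real. c \<ge> 1 \<and> (\<forall>A\<in>sets unit_borel.
         measure \<mu> A / c \<le> measure lborel A \<and> measure lborel A \<le> c * measure \<mu> A)) \<and>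
     \<comment> \<open>T measurable, mu-preserving and ergodic\<close>
     T \<in> measurable \<mu> \<mu> \<and>
     (\<forall>A\<in>sets \<mu>. measure \<mu> (preim T 1 A) = measure \<mu> A) \<and>
     (\<forall>A\<in>sets \<mu>. preim T 1 A = A \<longrightarrow> measure \<mu> A = 0 \<or> measure \<mu> A = 1) \<and>
     \<comment> \<open>the partition\<close>
     is_interval_partition P \<and>
     (\<forall>I\<in>P. continuous_on (interior I) T \<and>
        (strict_mono_on (interior I) T \<or> strict_antimono_on (interior I) T)) \<and>
     \<comment> \<open>generating: join of T^{-j} sigma(A) equals the Borel sets mod lambda\<close>
     (\<forall>B\<in>sets unit_borel. \<exists>C\<in>sigma_sets {0..1} (\<Union>j. preim_sigma T P j).
         (B - C) \<union> (C - B) \<in> null_sets lborel) \<and>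
     \<comment> \<open>finite entropy (terms are nonnegative, 0 log 0 = 0)\<close>
     (\<lambda>I. - measure \<mu> I * ln (measure \<mu> I)) summable_on P"

definition alpha_mixing :: "(real \<Rightarrow> real) \<Rightarrow> real measure \<Rightarrow> real set set \<Rightarrow> bool" where
  "alpha_mixing T \<mu> P \<longleftrightarrow> in_class_T T \<mu> P \<and>
     (\<exists>\<alpha>::nat \<Rightarrow> real. (\<forall>n. \<alpha> n \<ge> 0) \<and> \<alpha> \<longlonglongrightarrow> 0 \<and>
        (\<forall>l::nat. l \<ge> 1 \<longrightarrow> (\<forall>n::nat. \<forall>A\<in>sigma_sets {0..1} (refine T P l). \<forall>B\<in>sets \<mu>.
           \<bar>measure \<mu> (A \<inter> preim T (n + l) B) - measure \<mu> A * measure \<mu> B\<bar> \<le> \<alpha> n)))"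

definition exact :: "(real \<Rightarrow> real) \<Rightarrow> real measure \<Rightarrow> bool" where
  "exact T \<mu> \<longleftrightarrow>
     (\<forall>C. (\<forall>n. C \<in> preim T n ` sets \<mu>) \<longrightarrow> measure \<mu> C = 0 \<or> measure \<mu> C = 1)"

definition finite_meas_partition :: "real measure \<Rightarrow> real set set \<Rightarrow> bool" where
  "finite_meas_partition \<mu> Q \<longleftrightarrow> finite Q \<and> Q \<subseteq> sets \<mu> \<and> disjoint Q \<and> \<Union>Q = space \<mu>"

definition part_entropy :: "real measure \<Rightarrow> real set set \<Rightarrow> real" where
  "part_entropy \<mu> Q = (\<Sum>q\<in>Q. - measure \<mu> q * ln (measure \<mu> q))"

definition join_partition :: "real measure \<Rightarrow> (real \<Rightarrow> real) \<Rightarrow> real set set \<Rightarrow> nat \<Rightarrow> real set set" where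
  "join_partition \<mu> T Q n =
     {space \<mu> \<inter> (\<Inter>j<n. (T ^^ j) -` (q j)) | q. \<forall>j<n. q j \<in> Q} - {{}}"

definition entropy_wrt :: "real measure \<Rightarrow> (real \<Rightarrow> real) \<Rightarrow> real set set \<Rightarrow> real" where
  "entropy_wrt \<mu> T Q = lim (\<lambda>n. part_entropy \<mu> (join_partition \<mu> T Q (Suc n)) / real (Suc n))"

definition ks_entropy :: "real measure \<Rightarrow> (real \<Rightarrow> real) \<Rightarrow> ereal" where
  "ks_entropy \<mu> T = (SUP Q\<in>{Q. finite_meas_partition \<mu> Q}. ereal (entropy_wrt \<mu> T Q))"

end

theory Submission
  imports Defs
begin

text \<open>A tail event \<open>C\<close> is of the form \<open>T^-(n + l) B\<close> for every \<open>n\<close>, so \<open>\<alpha>\<close>-mixing with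
  \<open>\<alpha> n \<longlonglongrightarrow> 0\<close> makes \<open>C\<close> independent of every set in \<open>\<sigma>(\<A>^l)\<close>. Modulo null sets these
  \<sigma>-algebras increase with \<open>l\<close> and absorb every \<open>T^-j \<sigma>(\<A>)\<close>, so their union is an
  \<inter>-stable class that generates the Borel sets mod \<open>\<mu>\<close>. Hence \<open>C\<close> is independent of a version of
  itself and \<open>\<mu> C \<in> {0, 1}\<close>.

  The same argument shows that some \<open>q \<in> \<sigma>(\<A>^l)\<close> has \<open>0 < \<mu> q < 1\<close>. For the partition
  \<open>{q, X - q}\<close>, mixing at a fixed distance \<open>d\<close> keeps the symbol at time \<open>0\<close> far from determined
  by the block starting \<open>d\<close> steps later. This adds a fixed amount of entropy every \<open>d\<close> steps, so
  the block entropies grow linearly, and their averages, which converge by Fekete's lemma, have a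
  positive limit.\<close>

section \<open>Measure-theoretic preliminaries\<close>

definition ae_eq :: "'a measure \<Rightarrow> 'a set \<Rightarrow> 'a set \<Rightarrow> bool" where
  "ae_eq M A B \<longleftrightarrow> A \<in> sets M \<and> B \<in> sets M \<and> sym_diff A B \<in> null_sets M"

lemma ae_eq_refl: "A \<in> sets M \<Longrightarrow> ae_eq M A A"
  by (simp add: ae_eq_def)

lemma ae_eq_sym: "ae_eq M A B \<Longrightarrow> ae_eq M B A"
  by (simp add: ae_eq_def Un_commute)

lemma ae_eq_trans: "ae_eq M A B \<Longrightarrow> ae_eq M B C \<Longrightarrow> ae_eq M A C"
proof -
  assume "ae_eq M A B" "ae_eq M B C"
  then have "sym_diff A B \<union> sym_diff B C \<in> null_sets M" "A \<in> sets M" "C \<in> sets M"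
    unfolding ae_eq_def by auto
  then show ?thesis
    unfolding ae_eq_def by (blast intro: null_sets_subset)
qed

lemma ae_eq_subset:
  "A \<in> sets M \<Longrightarrow> B \<in> sets M \<Longrightarrow> B \<subseteq> A \<Longrightarrow> A - B \<subseteq> N \<Longrightarrow> N \<in> null_sets M \<Longrightarrow> ae_eq M A B"
  unfolding ae_eq_def by (auto intro: null_sets_subset)

lemma ae_eq_compl: "ae_eq M A B \<Longrightarrow> ae_eq M (space M - A) (space M - B)"
  unfolding ae_eq_def by (auto intro: null_sets_subset)

lemma ae_eq_Int: "ae_eq M A B \<Longrightarrow> ae_eq M C D \<Longrightarrow> ae_eq M (A \<inter> C) (B \<inter> D)"
proof -
  assume "ae_eq M A B" "ae_eq M C D"
  then have "sym_diff A B \<union> sym_diff C D \<in> null_sets M"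
      "A \<inter> C \<in> sets M" "B \<inter> D \<in> sets M"
    unfolding ae_eq_def by auto
  then show ?thesis
    unfolding ae_eq_def by (blast intro: null_sets_subset)
qed

lemma ae_eq_UN: "(\<And>i::nat. ae_eq M (A i) (B i)) \<Longrightarrow> ae_eq M (\<Union>i. A i) (\<Union>i. B i)"
proof -
  assume ae: "\<And>i. ae_eq M (A i) (B i)"
  have "(\<Union>i. sym_diff (A i) (B i)) \<in> null_sets M"
    using ae unfolding ae_eq_def by auto
  moreover have "sym_diff (\<Union>i. A i) (\<Union>i. B i) \<subseteq> (\<Union>i. sym_diff (A i) (B i))"
    by blast
  moreover have "(\<Union>i. A i) \<in> sets M" "(\<Union>i. B i) \<in> sets M"
    using ae unfolding ae_eq_def by auto
  ultimately show ?thesis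
    unfolding ae_eq_def by (blast intro: null_sets_subset)
qed

lemma ae_eq_measure: "ae_eq M A B \<Longrightarrow> measure M A = measure M B"
proof -
  assume ae: "ae_eq M A B"
  let ?N = "sym_diff A B"
  have "measure M A = measure M (A - ?N)"
    using ae unfolding ae_eq_def by (simp add: measure_Diff_null_set)
  also have "A - ?N = B - ?N" by blast
  also have "measure M (B - ?N) = measure M B"
    using ae unfolding ae_eq_def by (simp add: measure_Diff_null_set)
  finally show ?thesis .
qed

text \<open>The sets that agree a.e. with a member of a sub-\<sigma>-algebra form a \<sigma>-algebra, so it
  suffices to approximate generators.\<close>

lemma sigma_sets_ae_approx:
  assumes "A \<in> sigma_sets (space M) E" and "E' \<subseteq> sets M"
    and approx: "\<And>a. a \<in> E \<Longrightarrow> \<exists>a'\<in>sigma_sets (space M) E'. ae_eq M a a'"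
  shows "\<exists>A'\<in>sigma_sets (space M) E'. ae_eq M A A'"
  using assms(1)
proof induction
  case (Basic a)
  then show ?case by (rule approx)
next
  case Empty
  show ?case by (intro bexI[of _ "{}"] ae_eq_refl) (auto intro: sigma_sets.Empty)
next
  case (Compl a)
  then show ?case by (blast intro: ae_eq_compl sigma_sets.Compl)
next
  case (Union a)
  then obtain a' where "\<And>i. a' i \<in> sigma_sets (space M) E' \<and> ae_eq M (a i) (a' i)"
    by metis
  then show ?case by (blast intro: ae_eq_UN sigma_sets.Union)
qed

lemma (in prob_space) prob_Int_eq_mult_if_trivial:
  assumes "A \<in> events" "C \<in> events" and "prob A = 0 \<or> prob A = 1"
  shows "prob (A \<inter> C) = prob A * prob C"
  using assms(3)
proof
  assume "prob A = 0"
  moreover have "prob (A \<inter> C) \<le> prob A"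
    using assms(1) by (intro finite_measure_mono) auto
  ultimately show ?thesis
    by (simp add: measure_le_0_iff)
next
  assume A1: "prob A = 1"
  have "prob (C - A) \<le> prob (space M - A)"
    using assms(1,2) sets.sets_into_space by (intro finite_measure_mono) auto
  also have "\<dots> = 0"
    using prob_compl[OF assms(1)] A1 by simp
  finally have "prob (C - A) = 0"
    by (simp add: measure_le_0_iff)
  then show ?thesis
    using finite_measure_Diff'[OF assms(2,1)] A1 by (simp add: Int_commute)
qed

section \<open>Inequalities for \<open>- x ln x\<close> and subadditive sequences\<close>

definition eta :: "real \<Rightarrow> real" where
  "eta x = - x * ln x"

lemma eta_0 [simp]: "eta 0 = 0" and eta_1 [simp]: "eta 1 = 0"
  by (simp_all add: eta_def)

lemma eta_nonneg: "0 \<le> x \<Longrightarrow> x \<le> 1 \<Longrightarrow> 0 \<le> eta x"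
  by (cases "x = 0") (auto simp: eta_def mult_nonneg_nonpos)

text \<open>Both bounds on \<open>eta\<close> come from \<open>ln y \<le> y - 1\<close>, applied to \<open>y = m/s\<close> resp. \<open>y = a b/x\<close>.\<close>

lemma eta_ge:
  assumes "0 \<le> x" "x \<le> m" "m \<le> s"
  shows "- x * ln s + x * (1 - m / s) \<le> eta x"
proof (cases "x = 0")
  case False
  then have "0 < x" "0 < m" "0 < s"
    using assms by auto
  then have "ln x \<le> ln m" "ln (m / s) \<le> m / s - 1"
    using assms by (auto intro: ln_le_minus_one)
  then have "ln x \<le> ln s + (m / s - 1)"
    using \<open>0 < m\<close> \<open>0 < s\<close> by (simp add: ln_div)
  then have "x * ln x \<le> x * (ln s + (m / s - 1))"
    using \<open>0 < x\<close> by (intro mult_left_mono) auto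
  then show ?thesis
    unfolding eta_def by (simp add: algebra_simps)
qed simp

lemma eta_le:
  assumes "0 \<le> x" "x \<le> a" "x \<le> b"
  shows "eta x \<le> - x * ln a - x * ln b + a * b - x"
proof (cases "x = 0")
  case True
  then show ?thesis using assms by simp
next
  case False
  then have "0 < x" "0 < a" "0 < b"
    using assms by auto
  then have "ln a + ln b - ln x \<le> a * b / x - 1"
    using ln_le_minus_one[of "a * b / x"] by (simp add: ln_div ln_mult)
  then have "x * (ln a + ln b - ln x) \<le> x * (a * b / x - 1)"
    using \<open>0 < x\<close> by (intro mult_left_mono) auto
  then show ?thesis
    using \<open>0 < x\<close> unfolding eta_def by (simp add: algebra_simps)
qed

definition split_gain :: "real \<Rightarrow> real \<Rightarrow> real" where
  "split_gain a b = a * (1 - a / (a + b)) + b * (1 - b / (a + b))"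

lemma split_gain_eq: "0 < a + b \<Longrightarrow> split_gain a b = 2 * a * b / (a + b)"
proof -
  assume "0 < a + b"
  then have ab: "1 - a / (a + b) = b / (a + b)" and ba: "1 - b / (a + b) = a / (a + b)"
    by (simp_all add: field_simps)
  have "split_gain a b = a * (b / (a + b)) + b * (a / (a + b))"
    unfolding split_gain_def ab ba ..
  also have "\<dots> = (a * b + b * a) / (a + b)"
    by (simp add: add_divide_distrib)
  also have "\<dots> = 2 * a * b / (a + b)"
    by (simp add: algebra_simps)
  finally show ?thesis .
qed

lemma split_gain_nonneg: "0 \<le> a \<Longrightarrow> 0 \<le> b \<Longrightarrow> 0 \<le> split_gain a b"
  by (cases "a + b = 0") (simp_all add: split_gain_def split_gain_eq)

lemma split_gain_ge:
  assumes "0 \<le> a" "0 \<le> b" "0 \<le> e" "e \<le> 1/2"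
    and "a \<le> (1 - e) * (a + b)" "b \<le> (1 - e) * (a + b)"
  shows "e * (a + b) \<le> split_gain a b"
proof (cases "a + b = 0")
  case False
  define s where "s = a + b"
  have "0 < s"
    using assms False unfolding s_def by simp
  have "0 \<le> (a - e * s) * (b - e * s)"
    using assms unfolding s_def by (intro mult_nonneg_nonneg) (simp_all add: algebra_simps)
  then have "e * (1 - e) * s * s \<le> a * b"
    unfolding s_def by (simp add: algebra_simps)
  then have "2 * e * (1 - e) * s \<le> 2 * a * b / s"
    using \<open>0 < s\<close> by (simp add: field_simps)
  moreover have "0 \<le> e * s * (1 - 2 * e)"
    using assms \<open>0 < s\<close> by simp
  then have "e * s \<le> 2 * e * (1 - e) * s"
    by (simp add: algebra_simps)
  ultimately show ?thesis
    using \<open>0 < s\<close> unfolding s_def by (simp add: split_gain_eq)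
next
  case True
  then have "a = 0" "b = 0"
    using assms by auto
  then show ?thesis
    by (simp add: split_gain_def)
qed

text \<open>Shannon's inequality \<open>H(U, W) \<le> H(U) + H(W)\<close>.\<close>

lemma sum_eta_joint_le:
  assumes "finite U" "finite W" and x: "\<And>u w. 0 \<le> x u w"
    and a: "\<And>u. u \<in> U \<Longrightarrow> (\<Sum>w\<in>W. x u w) = a u" and b: "\<And>w. w \<in> W \<Longrightarrow> (\<Sum>u\<in>U. x u w) = b w"
    and "sum a U = 1" "sum b W = 1"
  shows "(\<Sum>u\<in>U. \<Sum>w\<in>W. eta (x u w)) \<le> (\<Sum>u\<in>U. eta (a u)) + (\<Sum>w\<in>W. eta (b w))"
proof -
  have x_le: "x u w \<le> a u" "x u w \<le> b w" if "u \<in> U" "w \<in> W" for u w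
    using member_le_sum[of w W "x u"] member_le_sum[of u U "\<lambda>u. x u w"] that a b x assms(1,2)
    by auto
  have first: "(\<Sum>u\<in>U. \<Sum>w\<in>W. - x u w * ln (a u)) = (\<Sum>u\<in>U. eta (a u))"
    using a by (intro sum.cong) (simp_all add: sum_distrib_right[symmetric] sum_negf eta_def)
  have "(\<Sum>u\<in>U. \<Sum>w\<in>W. x u w * ln (b w)) = (\<Sum>w\<in>W. \<Sum>u\<in>U. x u w * ln (b w))"
    by (rule sum.swap)
  also have "\<dots> = - (\<Sum>w\<in>W. eta (b w))"
    using b by (simp add: sum_distrib_right[symmetric] sum_negf eta_def)
  finally have second: "(\<Sum>u\<in>U. \<Sum>w\<in>W. x u w * ln (b w)) = - (\<Sum>w\<in>W. eta (b w))" .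
  have third: "(\<Sum>u\<in>U. \<Sum>w\<in>W. a u * b w) = 1"
    using assms(6,7) by (simp add: sum_product[symmetric])
  have fourth: "(\<Sum>u\<in>U. \<Sum>w\<in>W. x u w) = 1"
    using a assms(6) by simp
  have "(\<Sum>u\<in>U. \<Sum>w\<in>W. eta (x u w))
      \<le> (\<Sum>u\<in>U. \<Sum>w\<in>W. - x u w * ln (a u) - x u w * ln (b w) + a u * b w - x u w)"
    using eta_le x_le x by (intro sum_mono) auto
  also have "\<dots> = (\<Sum>u\<in>U. \<Sum>w\<in>W. - x u w * ln (a u)) - (\<Sum>u\<in>U. \<Sum>w\<in>W. x u w * ln (b w))
      + (\<Sum>u\<in>U. \<Sum>w\<in>W. a u * b w) - (\<Sum>u\<in>U. \<Sum>w\<in>W. x u w)"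
    by (simp only: sum.distrib sum_subtractf)
  finally show ?thesis
    unfolding first second third fourth by simp
qed

lemma sum_eta_refinement_ge:
  assumes "finite U" and x: "\<And>b u w. 0 \<le> x b u w"
    and m: "\<And>b w. (\<Sum>u\<in>U. x b u w) = m b w" and s: "\<And>w. m True w + m False w = s w"
  shows "(\<Sum>w\<in>W. eta (s w) + split_gain (m True w) (m False w))
    \<le> (\<Sum>b\<in>UNIV. \<Sum>u\<in>U. \<Sum>w\<in>W. eta (x b u w))"
proof -
  have m_nonneg: "0 \<le> m b w" for b w
    unfolding m[symmetric] using x by (simp add: sum_nonneg)
  have x_le: "x b u w \<le> m b w" if "u \<in> U" for b u w
    unfolding m[symmetric] using member_le_sum[of u U "\<lambda>u. x b u w"] x that assms(1) by auto
  have m_le: "m b w \<le> s w" for b w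
    using s[of w] m_nonneg[of True w] m_nonneg[of False w] by (cases b) auto
  define g where "g b w = - ln (s w) + (1 - m b w / s w)" for b w
  have "(\<Sum>w\<in>W. eta (s w) + split_gain (m True w) (m False w)) = (\<Sum>w\<in>W. \<Sum>b\<in>UNIV. m b w * g b w)"
  proof (rule sum.cong)
    fix w
    have "(\<Sum>b\<in>UNIV. m b w * g b w)
        = - (m True w + m False w) * ln (s w)
          + (m True w * (1 - m True w / s w) + m False w * (1 - m False w / s w))"
      by (simp add: UNIV_bool g_def algebra_simps)
    then show "eta (s w) + split_gain (m True w) (m False w) = (\<Sum>b\<in>UNIV. m b w * g b w)"
      unfolding split_gain_def s eta_def by simp
  qed simp
  also have "\<dots> = (\<Sum>b\<in>UNIV. \<Sum>w\<in>W. \<Sum>u\<in>U. x b u w * g b w)"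
    by (subst sum.swap) (simp add: sum_distrib_right[symmetric] m)
  also have "\<dots> = (\<Sum>b\<in>UNIV. \<Sum>u\<in>U. \<Sum>w\<in>W. x b u w * g b w)"
    by (rule sum.cong[OF refl], rule sum.swap)
  also have "\<dots> \<le> (\<Sum>b\<in>UNIV. \<Sum>u\<in>U. \<Sum>w\<in>W. eta (x b u w))"
  proof (intro sum_mono)
    fix b u w assume "u \<in> U"
    from eta_ge[OF x x_le[OF this] m_le]
    show "x b u w * g b w \<le> eta (x b u w)"
      unfolding g_def by (simp add: algebra_simps)
  qed
  finally show ?thesis .
qed

lemma subadditive_mult_le:
  fixes u :: "nat \<Rightarrow> real"
  assumes "\<And>m n. u (m + n) \<le> u m + u n" and "u 0 = 0"
  shows "u (q * k) \<le> real q * u k"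
proof (induction q)
  case (Suc q)
  have "u (Suc q * k) \<le> u k + u (q * k)"
    using assms(1)[of k "q * k"] by simp
  with Suc show ?case
    by (simp add: algebra_simps)
qed (simp add: assms(2))

lemma subadditive_average_le:
  fixes u :: "nat \<Rightarrow> real"
  assumes sub: "\<And>m n. u (m + n) \<le> u m + u n" and nonneg: "\<And>n. 0 \<le> u n" and "u 0 = 0"
    and "1 \<le> k" "0 < m"
  shows "u m / real m \<le> u k / real k + real k * u 1 / real m"
proof -
  have "u m \<le> u (m div k * k) + u (m mod k)"
    using sub[of "m div k * k" "m mod k"] by simp
  also have "\<dots> \<le> real (m div k) * u k + real (m mod k) * u 1"
    using subadditive_mult_le[OF sub \<open>u 0 = 0\<close>, of "m div k" k]
      subadditive_mult_le[OF sub \<open>u 0 = 0\<close>, of "m mod k" 1] by simp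
  also have "\<dots> \<le> real m * (u k / real k) + real k * u 1"
  proof (rule add_mono)
    have "real (m div k) * real k \<le> real m"
      by (metis of_nat_le_iff of_nat_mult div_times_less_eq_dividend)
    have "real (m div k) * u k = real (m div k) * real k * u k / real k"
      using \<open>1 \<le> k\<close> by simp
    also have "\<dots> \<le> real m * u k / real k"
      using mult_right_mono[OF \<open>_ \<le> real m\<close> nonneg[of k]] by (rule divide_right_mono) simp
    finally show "real (m div k) * u k \<le> real m * (u k / real k)"
      by simp
    show "real (m mod k) * u 1 \<le> real k * u 1"
      using \<open>1 \<le> k\<close> nonneg[of 1] by (intro mult_right_mono) auto
  qed
  finally show ?thesis
    using \<open>0 < m\<close> by (simp add: field_simps)
qed

text \<open>Fekete's lemma (the limit is the infimum of the averages).\<close>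

lemma subadditive_averages_convergent:
  fixes u :: "nat \<Rightarrow> real"
  assumes sub: "\<And>m n. u (m + n) \<le> u m + u n" and nonneg: "\<And>n. 0 \<le> u n" and "u 0 = 0"
  shows "convergent (\<lambda>n. u (Suc n) / real (Suc n))"
proof -
  define a where "a n = u (Suc n) / real (Suc n)" for n
  define L where "L = Inf (range a)"
  have bdd: "bdd_below (range a)"
    unfolding a_def using nonneg by (intro bdd_belowI[of _ 0]) auto
  then have lower: "L \<le> a n" for n
    unfolding L_def by (intro cInf_lower) auto
  have "a \<longlonglongrightarrow> L"
  proof (rule LIMSEQ_I)
    fix e :: real assume "0 < e"
    then obtain k0 where "a k0 < L + e / 2"
      using cInf_lessD[of "range a" "L + e / 2"] unfolding L_def by auto
    then have uk: "u (Suc k0) / real (Suc k0) < L + e / 2"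
      unfolding a_def .
    obtain N :: nat where N: "2 * real (Suc k0) * u 1 / e < real N"
      using reals_Archimedean2 by blast
    have close: "a n < L + e" if "N \<le> n" for n
    proof -
      have "real (Suc k0) * u 1 / real (Suc n) < e / 2"
        using N that \<open>0 < e\<close> less_le_trans[OF N, of "real (Suc n)"]
        by (simp add: field_simps)
      then show ?thesis
        using subadditive_average_le[OF sub nonneg \<open>u 0 = 0\<close>, of "Suc k0" "Suc n"] uk
        unfolding a_def by linarith
    qed
    have "norm (a n - L) < e" if "N \<le> n" for n
      using close[OF that] lower[of n] by simp
    then show "\<exists>N. \<forall>n\<ge>N. norm (a n - L) < e"
      by blast
  qed
  then show ?thesis
    unfolding a_def convergent_def by blast
qed

lemma linear_growth_of_increments:
  fixes u :: "nat \<Rightarrow> real"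
  assumes "\<And>n. u n + c \<le> u (n + d)" and "u 0 = 0"
  shows "real k * c \<le> u (k * d)"
proof (induction k)
  case (Suc k)
  then show ?case
    using assms(1)[of "k * d"] by (simp add: algebra_simps)
qed (simp add: assms(2))

lemma averages_limit_ge:
  fixes u :: "nat \<Rightarrow> real"
  assumes lim: "(\<lambda>n. u (Suc n) / real (Suc n)) \<longlonglongrightarrow> L"
    and growth: "\<And>k. real k * c \<le> u (k * d)" and "1 \<le> d"
  shows "c / real d \<le> L"
proof -
  define r where "r k = Suc k * d - 1" for k
  have r_Suc: "Suc (r k) = Suc k * d" for k
    unfolding r_def using \<open>1 \<le> d\<close> by simp
  have "strict_mono r"
  proof (unfold strict_mono_Suc_iff, intro allI)
    fix k
    have "Suc (r k) < Suc (r (Suc k))"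
      unfolding r_Suc using \<open>1 \<le> d\<close> by simp
    then show "r k < r (Suc k)"
      by simp
  qed
  then have "(\<lambda>k. u (Suc (r k)) / real (Suc (r k))) \<longlonglongrightarrow> L"
    using LIMSEQ_subseq_LIMSEQ[OF lim] by (simp add: comp_def)
  moreover have "c / real d \<le> u (Suc (r k)) / real (Suc (r k))" for k
  proof -
    have "c / real d = real (Suc k) * c / real (Suc k * d)"
      by (simp only: of_nat_mult mult_divide_mult_cancel_left_if) simp
    also have "\<dots> \<le> u (Suc k * d) / real (Suc k * d)"
      by (intro divide_right_mono growth) simp
    finally show ?thesis
      unfolding r_Suc .
  qed
  ultimately show ?thesis
    by (intro LIMSEQ_le_const) auto
qed

section \<open>The join \<sigma>-algebras of the partition\<close>

locale class_T_system =
  fixes T :: "real \<Rightarrow> real" and \<mu> :: "real measure" and P :: "real set set"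
  assumes class_T: "in_class_T T \<mu> P"
begin

abbreviation X :: "real set" where "X \<equiv> {0..1}"

sublocale prob_space \<mu>
  using class_T unfolding in_class_T_def by auto

lemma space_eq: "space \<mu> = X"
  using class_T unfolding in_class_T_def by auto

lemma sets_eq: "sets \<mu> = sets unit_borel"
  using class_T unfolding in_class_T_def by auto

lemma sets_iff: "A \<in> sets \<mu> \<longleftrightarrow> A \<subseteq> X \<and> A \<in> sets borel"
  unfolding sets_eq unit_borel_def by (subst sets_restrict_space_iff) auto

lemma T_measurable: "T \<in> measurable \<mu> \<mu>"
  using class_T unfolding in_class_T_def by auto

lemma measure_preim_1: "A \<in> sets \<mu> \<Longrightarrow> prob (preim T 1 A) = prob A"
  using class_T unfolding in_class_T_def by auto

lemma lebesgue_null_imp_null: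
  assumes "A \<in> sets \<mu>" and "A \<in> null_sets lborel"
  shows "A \<in> null_sets \<mu>"
proof -
  obtain c :: real where c: "c \<ge> 1" "\<forall>A\<in>sets unit_borel. prob A / c \<le> measure lborel A"
    using class_T unfolding in_class_T_def by auto
  have "prob A / c \<le> 0"
    using c(2) assms sets_eq by (auto simp: measure_def null_setsD1)
  then have "prob A = 0"
    using c(1) by (simp add: divide_le_0_iff antisym)
  then show ?thesis
    using assms(1) by (simp add: emeasure_eq_measure null_setsI)
qed

lemma funpow_in_X: "x \<in> X \<Longrightarrow> (T ^^ n) x \<in> X"
  using measurable_space[OF T_measurable] space_eq by (induction n) auto

lemma preim_in_sets: "A \<in> sets \<mu> \<Longrightarrow> preim T n A \<in> sets \<mu>"
  using measurable_sets[OF measurable_compose_n[OF T_measurable]]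
  by (metis Int_commute preim_def space_eq)

lemma preim_subset: "preim T n A \<subseteq> X"
  by (auto simp: preim_def)

lemma preim_0: "A \<subseteq> X \<Longrightarrow> preim T 0 A = A"
  by (auto simp: preim_def)

lemma preim_Suc: "preim T (Suc n) A = preim T 1 (preim T n A)"
  using funpow_in_X[of _ 1] by (auto simp: preim_def funpow_swap1)

lemma preim_Int: "preim T n (A \<inter> B) = preim T n A \<inter> preim T n B"
  by (auto simp: preim_def)

lemma preim_UN: "preim T n (\<Union>i\<in>I. A i) = (\<Union>i\<in>I. preim T n (A i))"
  by (auto simp: preim_def)

lemma measure_preim: "A \<in> sets \<mu> \<Longrightarrow> prob (preim T n A) = prob A"
proof (induction n)
  case 0
  then show ?case using sets_iff by (simp add: preim_0)
next
  case (Suc n)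
  then show ?case by (simp only: preim_Suc measure_preim_1 preim_in_sets)
qed

lemma preim_null: "N \<in> null_sets \<mu> \<Longrightarrow> preim T n N \<in> null_sets \<mu>"
proof -
  assume "N \<in> null_sets \<mu>"
  then have "N \<in> sets \<mu>" "prob N = 0"
    by (auto simp: measure_def null_setsD1)
  then show ?thesis
    by (intro null_setsI) (simp_all add: emeasure_eq_measure measure_preim preim_in_sets)
qed

lemma ae_eq_preim: "ae_eq \<mu> A B \<Longrightarrow> ae_eq \<mu> (preim T n A) (preim T n B)"
proof -
  assume ae: "ae_eq \<mu> A B"
  have "sym_diff (preim T n A) (preim T n B) = preim T n (sym_diff A B)"
    by (auto simp: preim_def)
  with ae show ?thesis
    unfolding ae_eq_def by (auto intro: preim_in_sets preim_null)
qed

lemma partition_sets: "I \<in> P \<Longrightarrow> I \<in> sets \<mu>"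
  using class_T unfolding in_class_T_def is_interval_partition_def sets_iff
  by (auto intro: real_interval_borel_measurable)

lemma countable_partition: "countable P"
  using class_T unfolding in_class_T_def is_interval_partition_def by auto

lemma preim_uncovered_null: "preim T n (X - \<Union>P) \<in> null_sets \<mu>"
proof -
  have "\<Union>P \<in> sets \<mu>"
    using countable_partition partition_sets by (intro sets.countable_Union) auto
  then have "X - \<Union>P \<in> sets \<mu>"
    using sets.compl_sets space_eq by metis
  moreover have "X - \<Union>P \<in> null_sets lborel"
    using class_T unfolding in_class_T_def is_interval_partition_def by auto
  ultimately show ?thesis
    by (intro preim_null lebesgue_null_imp_null)
qed

lemma ae_eq_Int_preim_cover: "A \<in> sets \<mu> \<Longrightarrow> ae_eq \<mu> A (A \<inter> preim T n (\<Union>P))"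
proof (rule ae_eq_subset[OF _ _ _ _ preim_uncovered_null])
  assume A: "A \<in> sets \<mu>"
  have "\<Union>P \<in> sets \<mu>"
    using countable_partition partition_sets by (intro sets.countable_Union) auto
  then show "A \<inter> preim T n (\<Union>P) \<in> sets \<mu>"
    using A preim_in_sets by blast
  show "A - A \<inter> preim T n (\<Union>P) \<subseteq> preim T n (X - \<Union>P)"
    using A sets_iff funpow_in_X by (auto simp: preim_def)
qed auto

definition cyl :: "(nat \<Rightarrow> real set) \<Rightarrow> nat \<Rightarrow> real set" where
  "cyl I l = X \<inter> (\<Inter>j<l. (T ^^ j) -` I j)"

definition join_sigma :: "nat \<Rightarrow> real set set" where
  "join_sigma l = sigma_sets X (refine T P l)"

lemma refine_eq: "refine T P l = {cyl I l | I. \<forall>j<l. I j \<in> P}"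
  by (simp add: refine_def cyl_def)

lemma cyl_Suc: "cyl I (Suc l) = cyl I l \<inter> preim T l (I l)"
  by (auto simp: cyl_def preim_def lessThan_Suc)

lemma cyl_in_sets: "\<forall>j<l. I j \<in> P \<Longrightarrow> cyl I l \<in> sets \<mu>"
proof (induction l)
  case 0
  then show ?case by (simp add: cyl_def space_eq[symmetric])
next
  case (Suc l)
  then show ?case by (simp add: cyl_Suc partition_sets preim_in_sets sets.Int)
qed

lemma refine_subset_sets: "refine T P l \<subseteq> sets \<mu>"
  unfolding refine_eq using cyl_in_sets by blast

lemma join_sigma_subset_sets: "join_sigma l \<subseteq> sets \<mu>"
  unfolding join_sigma_def using sets.sigma_sets_subset[OF refine_subset_sets] space_eq by simp

lemma join_sigma_subset_Pow: "join_sigma l \<subseteq> Pow X"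
  using join_sigma_subset_sets sets.sets_into_space space_eq by blast

lemma join_sigma_Int: "A \<in> join_sigma l \<Longrightarrow> B \<in> join_sigma l \<Longrightarrow> A \<inter> B \<in> join_sigma l"
proof -
  assume A: "A \<in> join_sigma l" and B: "B \<in> join_sigma l"
  then have "A \<inter> B = X - ((X - A) \<union> (X - B))"
    using join_sigma_subset_Pow by blast
  with A B show ?thesis
    unfolding join_sigma_def by (metis sigma_sets.Compl sigma_sets_Un)
qed

lemma join_sigma_1: "join_sigma 1 = sigma_sets X P"
proof -
  have cyl_1: "cyl I 1 = I 0" if "I 0 \<in> P" for I
    using partition_sets[OF that] sets_iff by (auto simp: cyl_def lessThan_Suc)
  have "refine T P 1 = P"
    unfolding refine_eq
  proof (intro equalityI subsetI)
    fix a assume "a \<in> {cyl I 1 |I. \<forall>j<1. I j \<in> P}"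
    then show "a \<in> P" using cyl_1 by auto
  next
    fix J assume "J \<in> P"
    then show "J \<in> {cyl I 1 |I. \<forall>j<1. I j \<in> P}"
      using cyl_1[of "\<lambda>_. J"] by (intro CollectI exI[of _ "\<lambda>_. J"]) auto
  qed
  then show ?thesis
    unfolding join_sigma_def by simp
qed

lemma cyl_cong: "(\<And>j. j < l \<Longrightarrow> I j = I' j) \<Longrightarrow> cyl I l = cyl I' l"
  by (simp add: cyl_def)

lemma cyl_Cons: "cyl (case_nat J I) (Suc l) = X \<inter> J \<inter> preim T 1 (cyl I l)"
proof (rule set_eqI)
  fix x
  have "(\<forall>j<Suc l. (T ^^ j) x \<in> case_nat J I j) \<longleftrightarrow> x \<in> J \<and> (\<forall>j<l. (T ^^ Suc j) x \<in> I j)"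
    by (auto simp: less_Suc_eq_0_disj split: nat.splits)
  moreover have "x \<in> preim T 1 (cyl I l) \<longleftrightarrow> x \<in> X \<and> (\<forall>j<l. (T ^^ Suc j) x \<in> I j)"
    using funpow_in_X[of x 1] by (auto simp: cyl_def preim_def funpow_swap1)
  ultimately show "x \<in> cyl (case_nat J I) (Suc l) \<longleftrightarrow> x \<in> X \<inter> J \<inter> preim T 1 (cyl I l)"
    by (auto simp: cyl_def)
qed

lemma cyl_Int_preim_cover:
  "cyl I l \<inter> preim T l (\<Union>P) = (\<Union>J\<in>P. cyl (I(l := J)) (Suc l))"
proof -
  have "cyl (I(l := J)) (Suc l) = cyl I l \<inter> preim T l J" for J
    using cyl_cong[of l "I(l := J)" I] by (simp add: cyl_Suc)
  then show ?thesis
    by (auto simp: preim_def)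
qed

lemma preim_cyl_Int_preim_cover:
  "preim T 1 (cyl I l) \<inter> preim T 0 (\<Union>P) = (\<Union>J\<in>P. cyl (case_nat J I) (Suc l))"
  unfolding cyl_Cons by (auto simp: preim_def)

lemma UN_cyl_in_join_sigma:
  "(\<And>J. J \<in> P \<Longrightarrow> \<forall>j<l. I J j \<in> P) \<Longrightarrow> (\<Union>J\<in>P. cyl (I J) l) \<in> join_sigma l"
  unfolding join_sigma_def refine_eq using countable_partition
  by (intro sigma_sets_UNION) (auto intro: sigma_sets.Basic)

text \<open>The intervals of \<open>P\<close> cover \<open>X\<close> only up to a null set, so the refinements of \<open>\<A>^l\<close>
  below hold only modulo \<open>\<mu>\<close>.\<close>

lemma join_sigma_ae_Suc: "A \<in> join_sigma l \<Longrightarrow> \<exists>A'\<in>join_sigma (Suc l). ae_eq \<mu> A A'"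
  unfolding join_sigma_def space_eq[symmetric]
proof (erule sigma_sets_ae_approx[OF _ refine_subset_sets])
  fix a assume "a \<in> refine T P l"
  then obtain I where I: "\<forall>j<l. I j \<in> P" and a: "a = cyl I l"
    unfolding refine_eq by blast
  have "a \<inter> preim T l (\<Union>P) \<in> join_sigma (Suc l)"
    unfolding a cyl_Int_preim_cover using I by (intro UN_cyl_in_join_sigma) auto
  moreover have "ae_eq \<mu> a (a \<inter> preim T l (\<Union>P))"
    using a cyl_in_sets[OF I] by (simp add: ae_eq_Int_preim_cover)
  ultimately show "\<exists>a'\<in>sigma_sets (space \<mu>) (refine T P (Suc l)). ae_eq \<mu> a a'"
    unfolding join_sigma_def space_eq by (rule bexI[rotated])
qed

lemma preim_join_sigma_ae_Suc:
  assumes "A \<in> join_sigma l"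
  shows "\<exists>A'\<in>join_sigma (Suc l). ae_eq \<mu> (preim T 1 A) A'"
proof -
  have "T \<in> X \<rightarrow> X"
    using funpow_in_X[of _ 1] by auto
  from sigma_sets_vimage_commute[OF this, of "refine T P l"]
  have "preim T 1 A \<in> sigma_sets (space \<mu>) {T -` a \<inter> space \<mu> | a. a \<in> refine T P l}"
    using assms unfolding join_sigma_def preim_def space_eq by auto
  then show ?thesis
    unfolding join_sigma_def space_eq[symmetric]
  proof (rule sigma_sets_ae_approx[OF _ refine_subset_sets])
    fix b assume "b \<in> {T -` a \<inter> space \<mu> | a. a \<in> refine T P l}"
    then obtain I where I: "\<forall>j<l. I j \<in> P" and b: "b = preim T 1 (cyl I l)"
      unfolding refine_eq preim_def space_eq by auto
    have "b \<inter> preim T 0 (\<Union>P) \<in> join_sigma (Suc l)"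
      unfolding b preim_cyl_Int_preim_cover using I
      by (intro UN_cyl_in_join_sigma) (auto split: nat.split)
    moreover have "ae_eq \<mu> b (b \<inter> preim T 0 (\<Union>P))"
      using b cyl_in_sets[OF I] by (simp add: ae_eq_Int_preim_cover preim_in_sets)
    ultimately show "\<exists>b'\<in>sigma_sets (space \<mu>) (refine T P (Suc l)). ae_eq \<mu> b b'"
      unfolding join_sigma_def space_eq by (rule bexI[rotated])
  qed
qed

lemma join_sigma_ae_mono:
  assumes "A \<in> join_sigma l" and "l \<le> l'"
  shows "\<exists>A'\<in>join_sigma l'. ae_eq \<mu> A A'"
  using assms(2)
proof (induction l' rule: dec_induct)
  case base
  then show ?case using assms(1) join_sigma_subset_sets by (blast intro: ae_eq_refl)
next
  case (step m)
  then show ?case by (meson ae_eq_trans join_sigma_ae_Suc)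
qed

lemma preim_sigma_ae_join_sigma:
  "A \<in> sigma_sets X P \<Longrightarrow> \<exists>A'\<in>join_sigma (Suc j). ae_eq \<mu> (preim T j A) A'"
proof (induction j)
  case 0
  then have "A \<in> join_sigma 1" "A \<subseteq> X"
    using join_sigma_1 join_sigma_subset_Pow by auto
  then show ?case
    using join_sigma_subset_sets by (auto simp: preim_0 intro!: bexI[of _ A] ae_eq_refl)
next
  case (Suc j)
  then obtain A' where A': "A' \<in> join_sigma (Suc j)" "ae_eq \<mu> (preim T j A) A'"
    by blast
  obtain A'' where A'': "A'' \<in> join_sigma (Suc (Suc j))" "ae_eq \<mu> (preim T 1 A') A''"
    using preim_join_sigma_ae_Suc[OF A'(1)] by blast
  have "ae_eq \<mu> (preim T (Suc j) A) (preim T 1 A')"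
    unfolding preim_Suc[of j] using A'(2) by (rule ae_eq_preim)
  then show ?case
    using A'' ae_eq_trans by blast
qed

definition finitely_determined :: "real set set" where
  "finitely_determined = {A. \<exists>l\<ge>1. \<exists>A'\<in>join_sigma l. ae_eq \<mu> A A'}"

lemma finitely_determined_subset_sets: "finitely_determined \<subseteq> sets \<mu>"
  unfolding finitely_determined_def ae_eq_def by auto

lemma Int_stable_finitely_determined: "Int_stable finitely_determined"
proof (rule Int_stableI)
  fix a b assume "a \<in> finitely_determined" "b \<in> finitely_determined"
  then obtain l1 l2 a' b' where
    a: "l1 \<ge> 1" "a' \<in> join_sigma l1" "ae_eq \<mu> a a'" and
    b: "l2 \<ge> 1" "b' \<in> join_sigma l2" "ae_eq \<mu> b b'"
    unfolding finitely_determined_def by blast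
  obtain a'' b'' where
    "a'' \<in> join_sigma (max l1 l2)" "ae_eq \<mu> a' a''"
    "b'' \<in> join_sigma (max l1 l2)" "ae_eq \<mu> b' b''"
    using join_sigma_ae_mono[OF a(2)] join_sigma_ae_mono[OF b(2)] by (metis max.cobounded1 max.cobounded2)
  with a b show "a \<inter> b \<in> finitely_determined"
    unfolding finitely_determined_def
    by (intro CollectI exI[of _ "max l1 l2"] conjI bexI[of _ "a'' \<inter> b''"] ae_eq_Int join_sigma_Int)
      (auto intro: ae_eq_trans)
qed

lemma preim_sigma_subset_finitely_determined: "preim_sigma T P j \<subseteq> finitely_determined"
  unfolding preim_sigma_def finitely_determined_def
proof (intro image_subsetI CollectI)
  fix A assume "A \<in> sigma_sets X P"
  then show "\<exists>l\<ge>1. \<exists>A'\<in>join_sigma l. ae_eq \<mu> (preim T j A) A'"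
    using preim_sigma_ae_join_sigma by (intro exI[of _ "Suc j"]) auto
qed

text \<open>\<open>C\<close> is independent of the \<inter>-stable class \<open>finitely_determined\<close>, hence of the
  \<sigma>-algebra it generates, which contains a version \<open>C'\<close> of \<open>C\<close> since \<open>\<A>\<close> is generating;
  so \<open>prob C = prob (C' \<inter> C) = prob C ^ 2\<close>.\<close>

lemma prob_zero_one_if_indep_join_sigma:
  assumes C: "C \<in> sets \<mu>"
    and indep: "\<And>l A. l \<ge> 1 \<Longrightarrow> A \<in> join_sigma l \<Longrightarrow> prob (A \<inter> C) = prob A * prob C"
  shows "prob C = 0 \<or> prob C = 1"
proof -
  have "prob (A \<inter> C) = prob A * prob C" if A: "A \<in> finitely_determined" for A
  proof -
    obtain l A' where A': "l \<ge> 1" "A' \<in> join_sigma l" "ae_eq \<mu> A A'"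
      using A unfolding finitely_determined_def by blast
    have "prob (A \<inter> C) = prob (A' \<inter> C)"
      using ae_eq_measure[OF ae_eq_Int[OF A'(3) ae_eq_refl[OF C]]] .
    also have "\<dots> = prob A' * prob C"
      using indep[OF A'(1,2)] .
    finally show ?thesis
      using ae_eq_measure[OF A'(3)] by simp
  qed
  then have "indep_set finitely_determined {C}"
    using C finitely_determined_subset_sets by (intro indep_setI) auto
  then have sigma_indep: "indep_set (sigma_sets (space \<mu>) finitely_determined) (sigma_sets (space \<mu>) {C})"
    using Int_stable_finitely_determined by (intro indep_set_sigma_sets) (auto simp: Int_stable_def)
  have "\<forall>B\<in>sets unit_borel. \<exists>C'\<in>sigma_sets X (\<Union>j. preim_sigma T P j). sym_diff B C' \<in> null_sets lborel"
    using class_T unfolding in_class_T_def by (elim conjE) assumption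
  then obtain C' where C': "C' \<in> sigma_sets X (\<Union>j. preim_sigma T P j)" "sym_diff C C' \<in> null_sets lborel"
    using C unfolding sets_eq by blast
  moreover have "(\<Union>j. preim_sigma T P j) \<subseteq> finitely_determined"
    using preim_sigma_subset_finitely_determined by blast
  ultimately have C'_sigma: "C' \<in> sigma_sets (space \<mu>) finitely_determined"
    unfolding space_eq using sigma_sets_mono' by blast
  then have C'_sets: "C' \<in> sets \<mu>"
    using sets.sigma_sets_subset[OF finitely_determined_subset_sets] by auto
  have "prob (C' \<inter> C) = prob C' * prob C"
    using indep_setD[OF sigma_indep C'_sigma] by (auto intro: sigma_sets.Basic)
  moreover have CC': "ae_eq \<mu> C C'"
    unfolding ae_eq_def using C C'_sets C'(2) by (auto intro: lebesgue_null_imp_null)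
  then have "prob C' = prob C" "prob (C' \<inter> C) = prob C"
    using ae_eq_measure[OF CC'] ae_eq_measure[OF ae_eq_Int[OF ae_eq_sym[OF CC'] ae_eq_refl[OF C]]]
    by simp_all
  ultimately have "prob C * (prob C - 1) = 0"
    by (simp add: algebra_simps)
  then show ?thesis
    by simp
qed

lemma exact_if_mixing:
  assumes "\<alpha> \<longlonglongrightarrow> 0"
    and mixing: "\<And>l n A B. l \<ge> 1 \<Longrightarrow> A \<in> join_sigma l \<Longrightarrow> B \<in> sets \<mu> \<Longrightarrow>
       \<bar>prob (A \<inter> preim T (n + l) B) - prob A * prob B\<bar> \<le> \<alpha> n"
  shows "exact T \<mu>"
  unfolding exact_def
proof (intro allI impI)
  fix C assume tail: "\<forall>n. C \<in> preim T n ` sets \<mu>"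
  then obtain B0 where "B0 \<in> sets \<mu>" "C = preim T 0 B0"
    by blast
  then have C: "C \<in> sets \<mu>"
    by (simp add: preim_in_sets)
  show "prob C = 0 \<or> prob C = 1"
  proof (rule prob_zero_one_if_indep_join_sigma[OF C])
    fix l A assume l: "l \<ge> 1" and A: "A \<in> join_sigma l"
    have "\<bar>prob (A \<inter> C) - prob A * prob C\<bar> \<le> \<alpha> n" for n
    proof -
      obtain B where B: "B \<in> sets \<mu>" "C = preim T (n + l) B"
        using tail by auto
      show ?thesis
        unfolding B(2) using mixing[OF l A B(1), of n] by (simp add: measure_preim B(1))
    qed
    then have "\<bar>prob (A \<inter> C) - prob A * prob C\<bar> \<le> 0"
      by (intro LIMSEQ_le_const[OF assms(1)]) auto
    then show "prob (A \<inter> C) = prob A * prob C"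
      by simp
  qed
qed

text \<open>Otherwise every Borel set would be independent of all \<open>\<sigma>(\<A>^l)\<close>, hence trivial, but
  \<open>[0, 1/2]\<close> and \<open>(1/2, 1]\<close> both have positive measure.\<close>

lemma exists_nontrivial_join_sigma: "\<exists>l q. l \<ge> 1 \<and> q \<in> join_sigma l \<and> 0 < prob q \<and> prob q < 1"
proof (rule ccontr)
  assume no_nontrivial: "\<not> ?thesis"
  have trivial: "prob A = 0 \<or> prob A = 1" if "l \<ge> 1" "A \<in> join_sigma l" for l A
  proof -
    have "\<not> (0 < prob A \<and> prob A < 1)"
      using no_nontrivial that by blast
    then show ?thesis
      using prob_le_1[of A] measure_nonneg[of \<mu> A] by linarith
  qed
  have zero_one: "prob C = 0 \<or> prob C = 1" if C: "C \<in> sets \<mu>" for C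
  proof (rule prob_zero_one_if_indep_join_sigma[OF C])
    fix l A assume l: "l \<ge> 1" and A: "A \<in> join_sigma l"
    then have "A \<in> sets \<mu>"
      using join_sigma_subset_sets by blast
    then show "prob (A \<inter> C) = prob A * prob C"
      by (rule prob_Int_eq_mult_if_trivial[OF _ C trivial[OF l A]])
  qed
  obtain c :: real where c: "c \<ge> 1" "\<And>A. A \<in> sets \<mu> \<Longrightarrow> measure lborel A \<le> c * prob A"
    using class_T unfolding in_class_T_def sets_eq by auto
  let ?L = "{0..1/2::real}" and ?R = "{1/2<..1::real}"
  have LR: "?L \<in> sets \<mu>" "?R \<in> sets \<mu>"
    unfolding sets_iff by auto
  have "0 < c * prob ?L" "0 < c * prob ?R"
    using c(2)[OF LR(1)] c(2)[OF LR(2)] by simp_all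
  then have "prob ?L \<noteq> 0" "prob ?R \<noteq> 0"
    by auto
  then have "prob ?L = 1" "prob ?R = 1"
    using zero_one[OF LR(1)] zero_one[OF LR(2)] by simp_all
  moreover have "prob (?L \<union> ?R) = prob ?L + prob ?R"
    using LR by (intro finite_measure_Union) auto
  ultimately show False
    using prob_le_1[of "?L \<union> ?R"] by simp
qed

end

section \<open>Block entropies of a two-set partition\<close>

locale two_set_partition = class_T_system +
  fixes q :: "real set"
  assumes q_in_sets: "q \<in> sets \<mu>"
begin

definition side :: "bool \<Rightarrow> real set" where
  "side b = (if b then q else X - q)"

definition word_cyl :: "bool list \<Rightarrow> real set" where
  "word_cyl w = X \<inter> (\<Inter>j<length w. preim T j (side (w ! j)))"

definition words :: "nat \<Rightarrow> bool list set" where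
  "words n = {w. length w = n}"

definition block_entropy :: "nat \<Rightarrow> real" where
  "block_entropy n = (\<Sum>w\<in>words n. eta (prob (word_cyl w)))"

lemma side_in_sets: "side b \<in> sets \<mu>"
  using q_in_sets sets.compl_sets[OF q_in_sets] space_eq by (simp add: side_def)

lemma side_subset: "side b \<subseteq> X"
  using side_in_sets sets_iff by blast

lemma word_cyl_iff: "x \<in> word_cyl w \<longleftrightarrow> x \<in> X \<and> (\<forall>j<length w. (T ^^ j) x \<in> side (w ! j))"
  by (auto simp: word_cyl_def preim_def)

lemma word_cyl_Nil: "word_cyl [] = X"
  by (simp add: word_cyl_def)

lemma word_cyl_Cons: "word_cyl (b # w) = side b \<inter> preim T 1 (word_cyl w)"
proof (rule set_eqI)
  fix x
  have "x \<in> word_cyl (b # w) \<longleftrightarrow> x \<in> X \<and> x \<in> side b \<and> (\<forall>j<length w. (T ^^ Suc j) x \<in> side (w ! j))"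
    unfolding word_cyl_iff by (auto simp: less_Suc_eq_0_disj)
  also have "\<dots> \<longleftrightarrow> x \<in> side b \<inter> preim T 1 (word_cyl w)"
    using side_subset funpow_in_X[of x 1] by (auto simp: preim_def funpow_swap1 word_cyl_iff)
  finally show "x \<in> word_cyl (b # w) \<longleftrightarrow> x \<in> side b \<inter> preim T 1 (word_cyl w)" .
qed

lemma word_cyl_in_sets: "word_cyl w \<in> sets \<mu>"
  by (induction w) (auto simp: word_cyl_Nil word_cyl_Cons space_eq[symmetric] side_in_sets preim_in_sets)

lemma word_cyl_subset: "word_cyl w \<subseteq> X"
  by (auto simp: word_cyl_def)

lemma word_cyl_append: "word_cyl (u @ w) = word_cyl u \<inter> preim T (length u) (word_cyl w)"
proof (induction u)
  case Nil
  then show ?case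
    using word_cyl_subset[of w] by (simp add: word_cyl_Nil preim_0 Int_absorb1)
next
  case (Cons b u)
  then show ?case
    by (simp add: word_cyl_Cons preim_Int preim_Suc[of "length u"] Int_assoc)
qed

lemma word_cyl_disjoint: "length u = length w \<Longrightarrow> u \<noteq> w \<Longrightarrow> word_cyl u \<inter> word_cyl w = {}"
proof -
  assume "length u = length w" "u \<noteq> w"
  then obtain j where j: "j < length u" "u ! j \<noteq> w ! j"
    using nth_equalityI by blast
  then have disjoint: "side (u ! j) \<inter> side (w ! j) = {}"
    by (auto simp: side_def)
  show ?thesis
  proof (rule equals0I)
    fix x assume "x \<in> word_cyl u \<inter> word_cyl w"
    then have "x \<in> word_cyl u" "x \<in> word_cyl w"
      by simp_all
    then have "(T ^^ j) x \<in> side (u ! j)" "(T ^^ j) x \<in> side (w ! j)"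
      using j(1) \<open>length u = length w\<close> by (simp_all add: word_cyl_iff)
    with disjoint show False
      by blast
  qed
qed

lemma word_cyl_cover: "x \<in> X \<Longrightarrow> \<exists>w\<in>words n. x \<in> word_cyl w"
proof -
  assume x: "x \<in> X"
  define w where "w = map (\<lambda>j. (T ^^ j) x \<in> q) [0..<n]"
  have "w \<in> words n" "x \<in> word_cyl w"
    unfolding w_def words_def word_cyl_iff using x funpow_in_X[OF x] by (auto simp: side_def)
  then show ?thesis by blast
qed

lemma finite_words: "finite (words n)"
  using finite_lists_length_eq[of "UNIV :: bool set" n] by (simp add: words_def)

lemma sum_words_Suc: "(\<Sum>v\<in>words (Suc n). f v) = (\<Sum>b\<in>UNIV. \<Sum>w\<in>words n. f (b # w))"
proof -
  have "words (Suc n) = (\<lambda>(b, w). b # w) ` (UNIV \<times> words n)"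
    unfolding words_def by (auto simp: length_Suc_conv image_iff)
  moreover have "inj_on (\<lambda>(b, w). b # w) (UNIV \<times> words n)"
    by (auto simp: inj_on_def)
  ultimately have "(\<Sum>v\<in>words (Suc n). f v) = sum (f \<circ> (\<lambda>(b, w). b # w)) (UNIV \<times> words n)"
    using sum.reindex by metis
  then show ?thesis
    by (simp add: sum.cartesian_product comp_def split_beta)
qed

lemma sum_words_append: "(\<Sum>v\<in>words (m + n). f v) = (\<Sum>u\<in>words m. \<Sum>w\<in>words n. f (u @ w))"
proof -
  have "words (m + n) = (\<lambda>(u, w). u @ w) ` (words m \<times> words n)"
  proof (intro equalityI subsetI)
    fix v assume "v \<in> words (m + n)"
    then have "v = take m v @ drop m v" "take m v \<in> words m" "drop m v \<in> words n"
      unfolding words_def by auto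
    then show "v \<in> (\<lambda>(u, w). u @ w) ` (words m \<times> words n)"
      by (metis (no_types, lifting) SigmaI case_prod_conv image_eqI)
  qed (auto simp: words_def)
  moreover have "inj_on (\<lambda>(u, w). u @ w) (words m \<times> words n)"
    by (auto simp: inj_on_def words_def)
  ultimately have "(\<Sum>v\<in>words (m + n). f v) = sum (f \<circ> (\<lambda>(u, w). u @ w)) (words m \<times> words n)"
    using sum.reindex by metis
  then show ?thesis
    by (simp add: sum.cartesian_product comp_def split_beta)
qed

lemma prob_UN_preim_word_cyl_Int:
  assumes "B \<subseteq> words n" and "Y \<in> sets \<mu>"
  shows "prob (\<Union>w\<in>B. preim T k (word_cyl w) \<inter> Y) = (\<Sum>w\<in>B. prob (preim T k (word_cyl w) \<inter> Y))"
proof (rule finite_measure_finite_Union)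
  show "finite B"
    using assms(1) finite_words finite_subset by blast
  show "(\<lambda>w. preim T k (word_cyl w) \<inter> Y) ` B \<subseteq> sets \<mu>"
    using assms(2) word_cyl_in_sets preim_in_sets by blast
  show "disjoint_family_on (\<lambda>w. preim T k (word_cyl w) \<inter> Y) B"
    unfolding disjoint_family_on_def
  proof (intro ballI impI)
    fix u v assume "u \<in> B" "v \<in> B" "u \<noteq> v"
    moreover have "length u = length v"
      using assms(1) \<open>u \<in> B\<close> \<open>v \<in> B\<close> unfolding words_def by auto
    ultimately have "word_cyl u \<inter> word_cyl v = {}"
      using word_cyl_disjoint by blast
    then show "preim T k (word_cyl u) \<inter> Y \<inter> (preim T k (word_cyl v) \<inter> Y) = {}"
      unfolding preim_def by blast
  qed
qed

lemma sum_prob_preim_word_cyl_Int: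
  assumes "Y \<in> sets \<mu>"
  shows "(\<Sum>w\<in>words n. prob (preim T k (word_cyl w) \<inter> Y)) = prob Y"
proof -
  have "Y = (\<Union>w\<in>words n. preim T k (word_cyl w) \<inter> Y)"
  proof (intro equalityI subsetI)
    fix x assume x: "x \<in> Y"
    then have "x \<in> X"
      using assms sets_iff by blast
    then obtain w where "w \<in> words n" "(T ^^ k) x \<in> word_cyl w"
      using word_cyl_cover funpow_in_X by blast
    then show "x \<in> (\<Union>w\<in>words n. preim T k (word_cyl w) \<inter> Y)"
      using x \<open>x \<in> X\<close> by (auto simp: preim_def)
  qed blast
  then have "prob Y = prob (\<Union>w\<in>words n. preim T k (word_cyl w) \<inter> Y)"
    by (rule arg_cong)
  also have "\<dots> = (\<Sum>w\<in>words n. prob (preim T k (word_cyl w) \<inter> Y))"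
    by (rule prob_UN_preim_word_cyl_Int[OF subset_refl assms])
  finally show ?thesis ..
qed

lemma sum_prob_word_cyl: "(\<Sum>w\<in>words n. prob (word_cyl w)) = 1"
  using sum_prob_preim_word_cyl_Int[OF sets.top, where n = n and k = 0] word_cyl_subset
  using prob_space by (simp add: space_eq preim_0 Int_absorb2)

lemma block_entropy_0: "block_entropy 0 = 0"
  using prob_space by (simp add: block_entropy_def words_def word_cyl_Nil space_eq)

lemma block_entropy_nonneg: "0 \<le> block_entropy n"
  unfolding block_entropy_def by (intro sum_nonneg eta_nonneg) auto

lemma block_entropy_subadditive: "block_entropy (m + n) \<le> block_entropy m + block_entropy n"
proof -
  define x where "x u w = prob (word_cyl (u @ w))" for u w
  have x_eq: "x u w = prob (preim T m (word_cyl w) \<inter> word_cyl u)" if "u \<in> words m" for u w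
    using that unfolding x_def words_def by (simp add: word_cyl_append Int_commute)
  have "(\<Sum>u\<in>words m. \<Sum>w\<in>words n. eta (x u w))
      \<le> (\<Sum>u\<in>words m. eta (prob (word_cyl u))) + (\<Sum>w\<in>words n. eta (prob (word_cyl w)))"
  proof (rule sum_eta_joint_le[OF finite_words finite_words _ _ _ sum_prob_word_cyl sum_prob_word_cyl])
    show "0 \<le> x u w" for u w
      by (simp add: x_def)
    show "(\<Sum>w\<in>words n. x u w) = prob (word_cyl u)" if "u \<in> words m" for u
      using x_eq[OF that] sum_prob_preim_word_cyl_Int[OF word_cyl_in_sets] by simp
    show "(\<Sum>u\<in>words m. x u w) = prob (word_cyl w)" for w
    proof -
      have "(\<Sum>u\<in>words m. x u w) = (\<Sum>u\<in>words m. prob (preim T 0 (word_cyl u) \<inter> preim T m (word_cyl w)))"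
        using x_eq word_cyl_subset by (intro sum.cong) (auto simp: preim_0 Int_commute)
      also have "\<dots> = prob (word_cyl w)"
        by (simp add: sum_prob_preim_word_cyl_Int measure_preim preim_in_sets word_cyl_in_sets)
      finally show ?thesis .
    qed
  qed
  then show ?thesis
    unfolding block_entropy_def sum_words_append x_def .
qed

definition split_measure :: "nat \<Rightarrow> bool \<Rightarrow> bool list \<Rightarrow> real" where
  "split_measure d b w = prob (side b \<inter> preim T d (word_cyl w))"

definition word_gain :: "nat \<Rightarrow> bool list \<Rightarrow> real" where
  "word_gain d w = split_gain (split_measure d True w) (split_measure d False w)"

lemma split_measure_nonneg: "0 \<le> split_measure d b w"
  by (simp add: split_measure_def)

lemma split_measure_sum: "split_measure d True w + split_measure d False w = prob (word_cyl w)"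
proof -
  let ?Y = "preim T d (word_cyl w)"
  have Y: "?Y \<in> sets \<mu>" "?Y \<subseteq> X"
    using word_cyl_in_sets preim_in_sets preim_subset by auto
  have "prob (q \<inter> ?Y) + prob ((X - q) \<inter> ?Y) = prob ((q \<inter> ?Y) \<union> ((X - q) \<inter> ?Y))"
    using Y side_in_sets[of True] side_in_sets[of False]
    by (intro finite_measure_Union[symmetric]) (auto simp: side_def)
  also have "(q \<inter> ?Y) \<union> ((X - q) \<inter> ?Y) = ?Y"
    using Y by blast
  finally show ?thesis
    by (simp add: split_measure_def side_def measure_preim word_cyl_in_sets)
qed

lemma block_entropy_add_gain:
  assumes "1 \<le> d"
  shows "block_entropy N + (\<Sum>w\<in>words N. word_gain d w) \<le> block_entropy (N + d)"
proof -
  obtain e where d: "d = Suc e"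
    using assms by (cases d) auto
  define x where "x b u w = prob (word_cyl ((b # u) @ w))" for b u w
  have "(\<Sum>w\<in>words N. eta (prob (word_cyl w)) + word_gain d w)
      \<le> (\<Sum>b\<in>UNIV. \<Sum>u\<in>words e. \<Sum>w\<in>words N. eta (x b u w))"
    unfolding word_gain_def
  proof (rule sum_eta_refinement_ge[OF finite_words _ _ split_measure_sum])
    show "0 \<le> x b u w" for b u w
      by (simp add: x_def)
    show "(\<Sum>u\<in>words e. x b u w) = split_measure d b w" for b w
    proof -
      have "x b u w = prob (preim T 1 (word_cyl u) \<inter> (side b \<inter> preim T d (word_cyl w)))"
        if "u \<in> words e" for u
      proof -
        have "word_cyl ((b # u) @ w) = word_cyl (b # u) \<inter> preim T d (word_cyl w)"
          using that d unfolding words_def by (simp add: word_cyl_append del: append_Cons)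
        then show ?thesis
          unfolding x_def by (simp add: word_cyl_Cons Int_ac)
      qed
      moreover have "side b \<inter> preim T d (word_cyl w) \<in> sets \<mu>"
        using side_in_sets word_cyl_in_sets preim_in_sets by blast
      ultimately show ?thesis
        using sum_prob_preim_word_cyl_Int by (simp add: split_measure_def)
    qed
  qed
  also have "\<dots> = block_entropy (N + d)"
    unfolding block_entropy_def add.commute[of N] sum_words_append d sum_words_Suc x_def ..
  finally show ?thesis
    by (simp add: block_entropy_def sum.distrib)
qed

lemma join_partition_eq: "join_partition \<mu> T {q, X - q} n = word_cyl ` words n - {{}}"
proof -
  have word_cyl_eq: "word_cyl w = X \<inter> (\<Inter>j<length w. (T ^^ j) -` side (w ! j))" for w
    by (auto simp: word_cyl_def preim_def)
  have "{space \<mu> \<inter> (\<Inter>j<n. (T ^^ j) -` f j) | f. \<forall>j<n. f j \<in> {q, X - q}} = word_cyl ` words n"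
  proof (intro equalityI subsetI)
    fix A assume "A \<in> {space \<mu> \<inter> (\<Inter>j<n. (T ^^ j) -` f j) | f. \<forall>j<n. f j \<in> {q, X - q}}"
    then obtain f where f: "\<forall>j<n. f j \<in> {q, X - q}" "A = space \<mu> \<inter> (\<Inter>j<n. (T ^^ j) -` f j)"
      by blast
    define w where "w = map (\<lambda>j. f j = q) [0..<n]"
    have w: "length w = n"
      by (simp add: w_def)
    have "side (w ! j) = f j" if "j < n" for j
    proof -
      have "w ! j = (f j = q)"
        using that by (simp add: w_def)
      then show ?thesis
        using f(1) that by (cases "f j = q") (auto simp: side_def)
    qed
    then have "(\<Inter>j<n. (T ^^ j) -` side (w ! j)) = (\<Inter>j<n. (T ^^ j) -` f j)"
      by auto
    then have "word_cyl w = A"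
      unfolding word_cyl_eq f(2) w space_eq by (rule arg_cong)
    then show "A \<in> word_cyl ` words n"
      using w by (auto simp: words_def)
  next
    fix A assume "A \<in> word_cyl ` words n"
    then obtain w where w: "length w = n" "A = word_cyl w"
      by (auto simp: words_def)
    have A: "A = space \<mu> \<inter> (\<Inter>j<n. (T ^^ j) -` side (w ! j))"
      unfolding w(2) word_cyl_eq w(1) space_eq ..
    have sides: "\<forall>j<n. side (w ! j) \<in> {q, X - q}"
      by (simp add: side_def)
    show "A \<in> {space \<mu> \<inter> (\<Inter>j<n. (T ^^ j) -` f j) | f. \<forall>j<n. f j \<in> {q, X - q}}"
      by (insert A sides, intro CollectI exI[of _ "\<lambda>j. side (w ! j)"] conjI) simp_all
  qed
  then show ?thesis
    unfolding join_partition_def by simp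
qed

text \<open>Distinct words may share the empty cylinder, which \<open>join_partition\<close> lists only once; it
  contributes \<open>eta 0 = 0\<close> either way.\<close>

lemma part_entropy_join_partition: "part_entropy \<mu> (join_partition \<mu> T {q, X - q} n) = block_entropy n"
proof -
  have "part_entropy \<mu> (word_cyl ` words n - {{}}) = (\<Sum>A\<in>word_cyl ` words n. eta (prob A))"
    unfolding part_entropy_def eta_def using finite_words by (simp add: sum_diff1)
  also have "\<dots> = (\<Sum>w\<in>words n. eta (prob (word_cyl w)))"
  proof (subst sum.reindex_nontrivial)
    fix u v assume "u \<in> words n" "v \<in> words n" "u \<noteq> v" "word_cyl u = word_cyl v"
    then have "word_cyl u = {}"
      using word_cyl_disjoint unfolding words_def by fastforce
    then show "eta (prob (word_cyl u)) = 0"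
      by simp
  qed (simp_all add: finite_words comp_def)
  finally show ?thesis
    unfolding join_partition_eq block_entropy_def .
qed

lemma finite_meas_partition_two: "finite_meas_partition \<mu> {q, X - q}"
  using q_in_sets sets.compl_sets[OF q_in_sets] sets_iff[of q] space_eq
  unfolding finite_meas_partition_def disjoint_def by auto

definition biased_words :: "real \<Rightarrow> nat \<Rightarrow> nat \<Rightarrow> bool \<Rightarrow> bool list set" where
  "biased_words \<epsilon> d N b = {w\<in>words N. (1 - \<epsilon>) * prob (word_cyl w) < split_measure d b w}"

lemma finite_biased_words: "finite (biased_words \<epsilon> d N b)"
  by (simp add: biased_words_def finite_words)

lemma sum_prob_biased_words_le:
  assumes mixing: "\<And>B. B \<in> sets \<mu> \<Longrightarrow> prob (side b \<inter> preim T d B) \<le> prob (side b) * prob B + a"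
    and side_le: "prob (side b) \<le> 1 - 2 * \<epsilon>" and "0 < \<epsilon>" "a \<le> \<epsilon> * \<epsilon> / 4"
  shows "(\<Sum>w\<in>biased_words \<epsilon> d N b. prob (word_cyl w)) \<le> \<epsilon> / 4"
proof -
  define B where "B = biased_words \<epsilon> d N b"
  define Y where "Y = (\<Union>w\<in>B. word_cyl w)"
  have B: "B \<subseteq> words N" "finite B"
    using finite_biased_words unfolding B_def biased_words_def by auto
  have Y: "Y \<in> sets \<mu>"
    unfolding Y_def using B(2) word_cyl_in_sets by blast
  have "Y = (\<Union>w\<in>B. preim T 0 (word_cyl w) \<inter> space \<mu>)"
    unfolding Y_def using word_cyl_subset by (auto simp: preim_0 space_eq)
  then have prob_Y: "prob Y = (\<Sum>w\<in>B. prob (word_cyl w))"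
    using prob_UN_preim_word_cyl_Int[OF B(1) sets.top, where k = 0] word_cyl_subset
    by (simp add: preim_0 space_eq Int_absorb2)
  have "side b \<inter> preim T d Y = (\<Union>w\<in>B. preim T d (word_cyl w) \<inter> side b)"
    unfolding Y_def preim_UN by blast
  then have prob_side_Y: "prob (side b \<inter> preim T d Y) = (\<Sum>w\<in>B. split_measure d b w)"
    using prob_UN_preim_word_cyl_Int[OF B(1) side_in_sets, where k = d]
    by (simp add: split_measure_def Int_commute)
  have "(1 - \<epsilon>) * (\<Sum>w\<in>B. prob (word_cyl w)) \<le> (\<Sum>w\<in>B. split_measure d b w)"
    unfolding sum_distrib_left B_def biased_words_def by (intro sum_mono) auto
  also have "\<dots> \<le> prob (side b) * prob Y + a"
    using mixing[OF Y] prob_side_Y by simp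
  also have "\<dots> \<le> (1 - 2 * \<epsilon>) * prob Y + a"
    using side_le by (intro add_right_mono mult_right_mono) auto
  finally have "\<epsilon> * (\<Sum>w\<in>B. prob (word_cyl w)) \<le> \<epsilon> * (\<epsilon> / 4)"
    using \<open>a \<le> \<epsilon> * \<epsilon> / 4\<close> unfolding prob_Y by (simp add: algebra_simps)
  then show ?thesis
    using \<open>0 < \<epsilon>\<close> unfolding B_def by simp
qed

lemma sum_word_gain_ge:
  assumes mixing: "\<And>b B. B \<in> sets \<mu> \<Longrightarrow> prob (side b \<inter> preim T d B) \<le> prob (side b) * prob B + a"
    and side_le: "\<And>b. prob (side b) \<le> 1 - 2 * \<epsilon>"
    and \<epsilon>: "0 < \<epsilon>" "\<epsilon> \<le> 1/4" and a: "a \<le> \<epsilon> * \<epsilon> / 4"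
  shows "\<epsilon> / 2 \<le> (\<Sum>w\<in>words N. word_gain d w)"
proof -
  define p where "p w = prob (word_cyl w)" for w
  define B where "B = biased_words \<epsilon> d N True \<union> biased_words \<epsilon> d N False"
  have B: "B \<subseteq> words N" "finite B"
    using finite_biased_words unfolding B_def biased_words_def by auto
  have biased_small: "(\<Sum>w\<in>biased_words \<epsilon> d N b. p w) \<le> \<epsilon> / 4" for b
    unfolding p_def by (rule sum_prob_biased_words_le[OF _ side_le \<epsilon>(1) a]) (rule mixing)
  have "(\<Sum>w\<in>B. p w) \<le> (\<Sum>w\<in>biased_words \<epsilon> d N True. p w) + (\<Sum>w\<in>biased_words \<epsilon> d N False. p w)"
    unfolding B_def sum_Un[OF finite_biased_words finite_biased_words]
    by (simp add: p_def sum_nonneg)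
  also have "\<dots> \<le> \<epsilon> / 2"
    using biased_small[of True] biased_small[of False] by simp
  finally have B_small: "(\<Sum>w\<in>B. p w) \<le> \<epsilon> / 2" .
  have good: "\<epsilon> * p w \<le> word_gain d w" if "w \<in> words N - B" for w
  proof -
    have "split_measure d b w \<le> (1 - \<epsilon>) * (split_measure d True w + split_measure d False w)" for b
      using that unfolding B_def biased_words_def split_measure_sum by (cases b) auto
    then have "\<epsilon> * (split_measure d True w + split_measure d False w) \<le> word_gain d w"
      unfolding word_gain_def using \<epsilon> by (intro split_gain_ge split_measure_nonneg) auto
    then show ?thesis
      unfolding split_measure_sum p_def .
  qed
  have "\<epsilon> * \<epsilon> \<le> \<epsilon>"
    using mult_left_mono[of \<epsilon> 1 \<epsilon>] \<epsilon> by simp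
  then have "\<epsilon> / 2 \<le> \<epsilon> * (1 - \<epsilon> / 2)"
    by (simp add: algebra_simps)
  also have "\<dots> \<le> \<epsilon> * (1 - (\<Sum>w\<in>B. p w))"
    using \<epsilon> B_small by (intro mult_left_mono) auto
  also have "\<dots> = (\<Sum>w\<in>words N - B. \<epsilon> * p w)"
    using sum_prob_word_cyl[of N] B finite_words
    by (simp add: sum_distrib_left[symmetric] sum_diff p_def)
  also have "\<dots> \<le> (\<Sum>w\<in>words N - B. word_gain d w)"
    using good by (rule sum_mono)
  also have "\<dots> \<le> (\<Sum>w\<in>words N. word_gain d w)"
    using finite_words by (intro sum_mono2) (auto simp: word_gain_def split_gain_nonneg split_measure_nonneg)
  finally show ?thesis .
qed

lemma entropy_wrt_pos:
  assumes q: "1 \<le> l" "q \<in> join_sigma l" "0 < prob q" "prob q < 1"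
    and "\<alpha> \<longlonglongrightarrow> 0"
    and mixing: "\<And>l n A B. l \<ge> 1 \<Longrightarrow> A \<in> join_sigma l \<Longrightarrow> B \<in> sets \<mu> \<Longrightarrow>
       \<bar>prob (A \<inter> preim T (n + l) B) - prob A * prob B\<bar> \<le> \<alpha> n"
  shows "0 < entropy_wrt \<mu> T {q, X - q}"
proof -
  define \<epsilon> where "\<epsilon> = min (prob q) (1 - prob q) / 2"
  have \<epsilon>: "0 < \<epsilon>" "\<epsilon> \<le> 1/4"
    using q by (auto simp: \<epsilon>_def min_def)
  have side_le: "prob (side b) \<le> 1 - 2 * \<epsilon>" for b
    using prob_compl[OF q_in_sets] space_eq by (cases b) (auto simp: side_def \<epsilon>_def)
  obtain n0 where "\<forall>n\<ge>n0. norm (\<alpha> n - 0) < \<epsilon> * \<epsilon> / 4"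
    using LIMSEQ_D[OF \<open>\<alpha> \<longlonglongrightarrow> 0\<close>, of "\<epsilon> * \<epsilon> / 4"] \<epsilon> by auto
  then have n0: "\<alpha> n0 \<le> \<epsilon> * \<epsilon> / 4"
    by auto
  define d where "d = n0 + l"
  have "1 \<le> d"
    using q(1) by (simp add: d_def)
  have side_join: "side b \<in> join_sigma l" for b
    using q(2) space_eq unfolding side_def join_sigma_def by (auto intro: sigma_sets.Compl)
  have side_mixing: "prob (side b \<inter> preim T d B) \<le> prob (side b) * prob B + \<epsilon> * \<epsilon> / 4"
    if "B \<in> sets \<mu>" for b B
    using mixing[of l "side b" B n0, OF q(1) side_join that] n0 by (simp add: d_def abs_le_iff)
  have step: "block_entropy N + \<epsilon> / 2 \<le> block_entropy (N + d)" for N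
    using block_entropy_add_gain[OF \<open>1 \<le> d\<close>, of N] sum_word_gain_ge[OF side_mixing side_le \<epsilon> order_refl, of N]
    by simp
  have growth: "real k * (\<epsilon> / 2) \<le> block_entropy (k * d)" for k
    using linear_growth_of_increments[where u = block_entropy, OF step block_entropy_0] .
  obtain L where L: "(\<lambda>n. block_entropy (Suc n) / real (Suc n)) \<longlonglongrightarrow> L"
    using subadditive_averages_convergent[OF block_entropy_subadditive block_entropy_nonneg block_entropy_0]
    unfolding convergent_def by blast
  have "0 < \<epsilon> / 2 / real d"
    using \<epsilon> \<open>1 \<le> d\<close> by simp
  also have "\<dots> \<le> L"
    using averages_limit_ge[OF L growth \<open>1 \<le> d\<close>] .
  also have "L = entropy_wrt \<mu> T {q, X - q}"
    unfolding entropy_wrt_def part_entropy_join_partition using L by (rule limI[symmetric])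
  finally show ?thesis .
qed

end

lemma (in class_T_system) ks_entropy_pos_if_mixing:
  assumes "\<alpha> \<longlonglongrightarrow> 0"
    and mixing: "\<And>l n A B. l \<ge> 1 \<Longrightarrow> A \<in> join_sigma l \<Longrightarrow> B \<in> sets \<mu> \<Longrightarrow>
       \<bar>prob (A \<inter> preim T (n + l) B) - prob A * prob B\<bar> \<le> \<alpha> n"
  shows "0 < ks_entropy \<mu> T"
proof -
  obtain l q where q: "1 \<le> l" "q \<in> join_sigma l" "0 < prob q" "prob q < 1"
    using exists_nontrivial_join_sigma by blast
  then have "q \<in> sets \<mu>"
    using join_sigma_subset_sets by blast
  interpret two_set_partition T \<mu> P q
    by unfold_locales (rule \<open>q \<in> sets \<mu>\<close>)
  have "0 < entropy_wrt \<mu> T {q, X - q}"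
    by (rule entropy_wrt_pos[OF q assms])
  then have "0 < ereal (entropy_wrt \<mu> T {q, X - q})"
    by (simp add: zero_ereal_def)
  also have "\<dots> \<le> ks_entropy \<mu> T"
    unfolding ks_entropy_def by (rule SUP_upper) (simp add: finite_meas_partition_two)
  finally show ?thesis .
qed

lemma (in class_T_system) alpha_mixingE:
  assumes "alpha_mixing T \<mu> P"
  obtains \<alpha> :: "nat \<Rightarrow> real" where "\<alpha> \<longlonglongrightarrow> 0"
    and "\<And>l n A B. l \<ge> 1 \<Longrightarrow> A \<in> join_sigma l \<Longrightarrow> B \<in> sets \<mu> \<Longrightarrow>
       \<bar>prob (A \<inter> preim T (n + l) B) - prob A * prob B\<bar> \<le> \<alpha> n"
  using assms unfolding alpha_mixing_def join_sigma_def by blast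

theorem theorem3p6:
  fixes T :: "real \<Rightarrow> real" and \<mu> :: "real measure" and P :: "real set set"
  assumes "in_class_T T \<mu> P"
    and "alpha_mixing T \<mu> P"
  shows "exact T \<mu> \<and> ks_entropy \<mu> T > 0"
proof -
  interpret class_T_system T \<mu> P
    by (rule class_T_system.intro[OF assms(1)])
  obtain \<alpha> where "\<alpha> \<longlonglongrightarrow> 0"
    and mixing: "\<And>l n A B. l \<ge> 1 \<Longrightarrow> A \<in> join_sigma l \<Longrightarrow> B \<in> sets \<mu> \<Longrightarrow>
       \<bar>prob (A \<inter> preim T (n + l) B) - prob A * prob B\<bar> \<le> \<alpha> n"
    using alpha_mixingE[OF assms(2)] by blast
  show ?thesis
    using exact_if_mixing[OF \<open>\<alpha> \<longlonglongrightarrow> 0\<close> mixing] ks_entropy_pos_if_mixing[OF \<open>\<alpha> \<longlonglongrightarrow> 0\<close> mixing]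
    by blast
qed

end
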